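(* Let $(r_n)_{n\ge1}$ be the unique sequence of positive reals satisfying $r_n=2n-1+\dfrac{n^2}{r_{n+1}}$ for all $n\ge1$ (equivalently $r_1=4/\pi$ and $r_{n+1}=n^2/(r_n-(2n-1))$). Then for all $n\ge1$, $$\Big\lfloor r_n+\tfrac12\Big\rfloor=\Big\lfloor (1+\sqrt2)\,n-\tfrac12\sqrt2\Big\rfloor.$$ *)

theory Defs
  imports Complex_Main
begin

end

theory Submission
  imports Defs
begin

text \<open>Put \<open>a = 1 + \<surd>2\<close>, \<open>L\<^sub>n = a(2n - 1)/2\<close> and \<open>U\<^sub>n = L\<^sub>n + 1/(2a(2n + 1))\<close>. Because
  \<open>a\<^sup>2 = 2a + 1\<close>, one step \<open>T\<^sub>n y = 2n - 1 + n\<^sup>2/y\<close> of the recurrence maps \<open>L\<^sub>n\<^sub>+\<^sub>1\<close> exactly to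
  \<open>U\<^sub>n\<close> and \<open>U\<^sub>n\<^sub>+\<^sub>1\<close> to at least \<open>L\<^sub>n\<close>. On \<open>y \<ge> 2n + 1\<close>, where \<open>r\<^sub>n\<^sub>+\<^sub>1\<close>, \<open>L\<^sub>n\<^sub>+\<^sub>1\<close> and \<open>U\<^sub>n\<^sub>+\<^sub>1\<close> lie,
  \<open>T\<^sub>n\<close> is decreasing and shrinks distances by a factor \<open>4\<close>; so if \<open>r\<^sub>n\<close> were outside
  \<open>[L\<^sub>n, U\<^sub>n]\<close>, its distance to these intervals would quadruple at every step, which is
  incompatible with \<open>r\<^sub>n \<le> 3n\<close>.

  It remains to see that \<open>\<lfloor>y + 1/2\<rfloor>\<close> is constant on \<open>[L\<^sub>n, U\<^sub>n]\<close>, where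
  \<open>L\<^sub>n + 1/2 = (1 + \<surd>2)n - \<surd>2/2\<close>. An integer \<open>m > L\<^sub>n + 1/2\<close> gives \<open>2j > \<surd>2 t\<close> for
  \<open>j = m - n\<close>, \<open>t = 2n - 1\<close>; then \<open>(2j - \<surd>2 t)(2j + \<surd>2 t) = 4j\<^sup>2 - 2t\<^sup>2\<close> is a positive even
  integer, which keeps \<open>m - (L\<^sub>n + 1/2) = (2j - \<surd>2 t)/2\<close> above \<open>U\<^sub>n - L\<^sub>n\<close>.\<close>

lemma nonpos_if_quadrupling_linearly_bounded:
  fixes v :: "nat \<Rightarrow> real"
  assumes grow: "\<And>m. m \<ge> n \<Longrightarrow> v m > 0 \<Longrightarrow> 4 * v m \<le> v (Suc m)"
    and bound: "\<And>m. m \<ge> n \<Longrightarrow> v m \<le> C * real m"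
  shows "v n \<le> 0"
proof (rule ccontr)
  assume "\<not> v n \<le> 0"
  hence vn: "v n > 0" by simp
  have iter: "4 ^ k * v n \<le> v (n + k)" for k
  proof (induction k)
    case (Suc k)
    have "0 < 4 ^ k * v n" using vn by simp
    hence "4 * v (n + k) \<le> v (Suc (n + k))" using Suc.IH by (intro grow) auto
    thus ?case using Suc.IH by simp
  qed simp
  obtain k :: nat where k: "C * (real n + 1) / v n < 2 ^ k"
    using real_arch_pow[of 2] by auto
  have "real (k + 1) \<le> real ((2::nat) ^ k)"
    by (simp only: of_nat_le_iff) (simp add: Suc_leI)
  hence k_le: "real k + 1 \<le> 2 ^ k" by simp
  have "0 < C * real n" using bound[of n] vn by simp
  hence C: "0 \<le> C" by (simp add: zero_less_mult_iff)
  have k': "C * (real n + 1) < 2 ^ k * v n" using k vn by (simp add: field_simps)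
  have "C * real (n + k) \<le> C * (real n + 1) * (real k + 1)"
    using C by (simp add: algebra_simps)
  also have "\<dots> < (2 ^ k * v n) * 2 ^ k"
    using C by (intro mult_less_le_imp_less[OF k' k_le]) auto
  also have "\<dots> = 4 ^ k * v n"
    by (simp add: power_mult_distrib[symmetric] algebra_simps)
  also have "\<dots> \<le> v (n + k)" by (rule iter)
  also have "\<dots> \<le> C * real (n + k)" by (rule bound) simp
  finally show False by simp
qed

lemma sq_div_diff_le_quarter:
  fixes c x y :: real
  assumes "0 \<le> c" "2 * c + 1 \<le> x" "2 * c + 1 \<le> y"
    and pos: "0 < c\<^sup>2 / x - c\<^sup>2 / y"
  shows "c\<^sup>2 / x - c\<^sup>2 / y \<le> (y - x) / 4"
proof -
  have xy: "0 < x" "0 < y" using assms by auto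
  have "x \<le> y"
  proof (rule ccontr)
    assume "\<not> x \<le> y"
    hence "c\<^sup>2 / x \<le> c\<^sup>2 / y" using xy by (intro divide_left_mono) auto
    thus False using pos by simp
  qed
  have "4 * c\<^sup>2 \<le> (2 * c + 1) * (2 * c + 1)"
    using assms(1) by (simp add: power2_eq_square algebra_simps)
  also have "\<dots> \<le> x * y" using assms by (intro mult_mono) auto
  finally have "4 * c\<^sup>2 * (y - x) \<le> x * y * (y - x)"
    using \<open>x \<le> y\<close> by (intro mult_right_mono) auto
  moreover have "c\<^sup>2 / x - c\<^sup>2 / y = c\<^sup>2 * (y - x) / (x * y)"
    using xy by (simp add: field_simps)
  ultimately show ?thesis using xy by (simp add: field_simps)
qed

lemma recurrence_sandwich:
  fixes r L U :: "nat \<Rightarrow> real"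
  assumes pos: "\<And>m. m \<ge> 1 \<Longrightarrow> r m > 0"
    and rec: "\<And>m. m \<ge> 1 \<Longrightarrow> r m = 2 * real m - 1 + (real m)\<^sup>2 / r (m + 1)"
    and upper: "\<And>m. m \<ge> 1 \<Longrightarrow> U m = 2 * real m - 1 + (real m)\<^sup>2 / L (m + 1)"
    and lower: "\<And>m. m \<ge> 1 \<Longrightarrow> L m \<le> 2 * real m - 1 + (real m)\<^sup>2 / U (m + 1)"
    and L_ge: "\<And>m. m \<ge> 1 \<Longrightarrow> 2 * real m - 1 \<le> L m"
    and n: "n \<ge> 1"
  shows "L n \<le> r n \<and> r n \<le> U n"
proof -
  have map_ge: "2 * real m - 1 \<le> 2 * real m - 1 + (real m)\<^sup>2 / y" if "0 < y" for m y
    using that by simp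
  have map_le: "2 * real m - 1 + (real m)\<^sup>2 / y \<le> 3 * real m" if "2 * real m + 1 \<le> y" for m y
  proof -
    have "(real m)\<^sup>2 / y \<le> (real m)\<^sup>2 / (2 * real m + 1)"
      using that by (intro divide_left_mono) auto
    also have "\<dots> \<le> real m" by (simp add: field_simps power2_eq_square)
    finally show ?thesis by simp
  qed
  have L_ge': "2 * real m + 1 \<le> L (m + 1)" for m using L_ge[of "m + 1"] by simp
  have r_ge: "2 * real m + 1 \<le> r (m + 1)" for m
    using map_ge[OF pos, of "m + 2" "m + 1"] rec[of "m + 1"] by simp
  have U_ge: "2 * real m + 1 \<le> U (m + 1)" for m
    using map_ge[of "L (m + 2)" "m + 1"] L_ge'[of "m + 1"] upper[of "m + 1"] by simp
  define v where "v m = max (r m - U m) (L m - r m)" for m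
  have "v n \<le> 0"
  proof (rule nonpos_if_quadrupling_linearly_bounded)
    fix m assume m: "n \<le> m"
    then have "0 \<le> U m" "0 \<le> r m" using U_ge[of "m - 1"] pos[of m] n by auto
    moreover have "r m \<le> 3 * real m" using rec[of m] map_le[OF r_ge] m n by simp
    moreover have "L m \<le> 3 * real m" using lower[of m] map_le[OF U_ge, of m] m n by simp
    ultimately show "v m \<le> 3 * real m" unfolding v_def by simp
  next
    fix m assume "n \<le> m" and vm: "0 < v m"
    hence m: "1 \<le> m" using n by simp
    have "v m = r m - U m \<or> v m = L m - r m" unfolding v_def by linarith
    thus "4 * v m \<le> v (Suc m)"
    proof
      assume eq: "v m = r m - U m"
      have "r m - U m = (real m)\<^sup>2 / r (m + 1) - (real m)\<^sup>2 / L (m + 1)"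
        using rec[OF m] upper[OF m] by simp
      hence "r m - U m \<le> (L (m + 1) - r (m + 1)) / 4"
        using sq_div_diff_le_quarter[OF _ r_ge L_ge'] eq vm by simp
      thus ?thesis using eq unfolding v_def by simp
    next
      assume eq: "v m = L m - r m"
      have "L m - r m \<le> (real m)\<^sup>2 / U (m + 1) - (real m)\<^sup>2 / r (m + 1)"
        using rec[OF m] lower[OF m] by simp
      moreover have "(real m)\<^sup>2 / U (m + 1) - (real m)\<^sup>2 / r (m + 1) \<le> (r (m + 1) - U (m + 1)) / 4"
        using calculation eq vm by (intro sq_div_diff_le_quarter[OF _ U_ge r_ge]) auto
      ultimately have "L m - r m \<le> (r (m + 1) - U (m + 1)) / 4" by linarith
      thus ?thesis using eq unfolding v_def by simp
    qed
  qed
  thus ?thesis unfolding v_def by simp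
qed

lemma silver_ratio_sq: "(1 + sqrt 2) * (1 + sqrt 2) = 2 * (1 + sqrt 2) + (1::real)"
  by (simp add: algebra_simps)

lemma silver_ratio_gt_two: "2 < 1 + sqrt (2::real)"
  by (simp add: real_less_rsqrt)

definition lower_approx :: "nat \<Rightarrow> real" where
  "lower_approx n = (1 + sqrt 2) * (2 * real n - 1) / 2"

definition upper_approx :: "nat \<Rightarrow> real" where
  "upper_approx n = lower_approx n + 1 / (2 * (1 + sqrt 2) * (2 * real n + 1))"

lemma lower_approx_ge: "1 \<le> n \<Longrightarrow> 2 * real n - 1 \<le> lower_approx n"
  using silver_ratio_gt_two mult_right_mono[of 2 "1 + sqrt 2" "2 * real n - 1"]
  unfolding lower_approx_def by simp

lemma lower_approx_half_eq: "lower_approx n + 1 / 2 = (1 + sqrt 2) * real n - sqrt 2 / 2"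
  unfolding lower_approx_def by (simp add: field_simps)

lemma upper_approx_recurrence:
  "upper_approx n = 2 * real n - 1 + (real n)\<^sup>2 / lower_approx (n + 1)"
proof -
  define a :: real where "a = 1 + sqrt 2"
  have "0 < a" using silver_ratio_gt_two unfolding a_def by linarith
  hence "0 < a * (2 * real n + 1)" by simp
  thus ?thesis using silver_ratio_sq unfolding upper_approx_def lower_approx_def a_def[symmetric]
    by (simp add: field_simps) algebra
qed

lemma lower_approx_le_recurrence:
  assumes "1 \<le> n"
  shows "lower_approx n \<le> 2 * real n - 1 + (real n)\<^sup>2 / upper_approx (n + 1)"
proof -
  define a :: real where "a = 1 + sqrt 2"
  have a2: "a * a = 2 * a + 1" and a: "2 < a"
    using silver_ratio_sq silver_ratio_gt_two unfolding a_def by auto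
  define u where "u = upper_approx (n + 1)"
  have u: "u = a * (2 * real n + 1) / 2 + 1 / (2 * a * (2 * real n + 3))"
    unfolding u_def upper_approx_def lower_approx_def a_def by (simp add: algebra_simps)
  have a3: "0 < a * (2 * real n + 3)" using a by simp
  have "0 < u" unfolding u using a by (auto intro!: add_pos_pos)
  have "(2 * real n - 1) / (2 * a * (2 * real n + 3)) \<le> (2 * real n + 3) / (2 * a * (2 * real n + 3))"
    using a by (intro divide_right_mono) auto
  also have "\<dots> = 1 / (2 * a)" using a a3 by (simp add: field_simps)
  also have "\<dots> \<le> a / 2" using a a2 by (simp add: field_simps)
  finally have "(2 * real n - 1) * u \<le> 2 * a * (real n)\<^sup>2"
    unfolding u using a a2 a3 by (simp add: field_simps power2_eq_square)
  hence "(2 * real n - 1) / (2 * a) \<le> (real n)\<^sup>2 / u"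
    using \<open>0 < u\<close> a by (simp add: field_simps)
  moreover have "lower_approx n = 2 * real n - 1 + (2 * real n - 1) / (2 * a)"
    using a a2 unfolding lower_approx_def a_def[symmetric] by (simp add: field_simps) algebra
  ultimately show ?thesis unfolding u_def by simp
qed

lemma sqrt2_approx_gap:
  fixes j t :: int
  assumes "0 \<le> t" and above: "sqrt 2 * of_int t < 2 * of_int j"
  shows "2 \<le> (2 * of_int j - sqrt 2 * of_int t) * (2 * of_int j + sqrt 2 * of_int t)"
proof -
  have "0 \<le> sqrt 2 * of_int t" using \<open>0 \<le> t\<close> by simp
  from mult_strict_mono'[OF above above this this]
  have "real_of_int (t * t) < real_of_int (2 * (j * j))" by (simp add: algebra_simps)
  hence "t * t < 2 * (j * j)" by (simp only: of_int_less_iff)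
  hence "2 * t * t + 2 \<le> 4 * j * j" by linarith
  hence "real_of_int (2 * t * t + 2) \<le> real_of_int (4 * j * j)" by (simp only: of_int_le_iff)
  thus ?thesis by (simp add: algebra_simps)
qed

lemma upper_approx_half_lt_int:
  assumes n: "1 \<le> n" and above: "lower_approx n + 1 / 2 < of_int m"
  shows "upper_approx n + 1 / 2 < of_int m"
proof -
  define s :: real where "s = sqrt 2"
  define e where "e = 1 / (2 * (1 + s) * (2 * real n + 1))"
  define t :: int where "t = 2 * int n - 1"
  define d where "d = 2 * of_int (m - int n) - s * of_int t"
  have s: "1 < s" unfolding s_def by (simp add: real_less_rsqrt)
  have t: "1 \<le> t" "of_int t = 2 * real n - 1" unfolding t_def using n by auto
  have dist: "of_int m - (lower_approx n + 1 / 2) = d / 2"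
    unfolding d_def lower_approx_def t(2) s_def by (simp add: field_simps)
  have "0 < d" using above dist by linarith
  hence gap: "2 \<le> d * (d + 2 * s * of_int t)"
    using sqrt2_approx_gap[of t "m - int n"] t(1) unfolding d_def s_def by (simp add: algebra_simps)
  have "e < d / 2"
  proof (cases "1 \<le> d")
    case True
    have "2 * 2 * 3 \<le> 2 * (1 + s) * (2 * real n + 1)" using s n by (intro mult_mono) auto
    hence "e \<le> 1 / 12" unfolding e_def by (intro divide_left_mono) auto
    thus ?thesis using True by linarith
  next
    case False
    have "0 < s * of_int t" using s t(1) by simp
    hence "0 < d + 2 * s * of_int t" using \<open>0 < d\<close> by linarith
    have "2 * (1 + s) * (2 * real n + 1) = 2 * of_int t + 2 * s * of_int t + 4 + 4 * s"
      unfolding t(2) by (simp add: algebra_simps)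
    hence "d + 2 * s * of_int t < 2 * (1 + s) * (2 * real n + 1)"
      using False s t(1) by linarith
    hence "2 / (2 * (1 + s) * (2 * real n + 1)) < 2 / (d + 2 * s * of_int t)"
      using \<open>0 < d + 2 * s * of_int t\<close> by (intro divide_strict_left_mono) auto
    also have "\<dots> \<le> d" using gap \<open>0 < d + 2 * s * of_int t\<close> by (simp add: field_simps)
    finally show ?thesis unfolding e_def by simp
  qed
  thus ?thesis using dist unfolding upper_approx_def e_def s_def by simp
qed

lemma floor_round_eq_if_approx:
  assumes "1 \<le> n" "lower_approx n \<le> y" "y \<le> upper_approx n"
  shows "\<lfloor>y + 1 / 2\<rfloor> = \<lfloor>(1 + sqrt 2) * real n - sqrt 2 / 2\<rfloor>"
proof -
  let ?x = "lower_approx n + 1 / 2"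
  have "\<lfloor>?x\<rfloor> \<le> \<lfloor>y + 1 / 2\<rfloor>" using assms(2) by (intro floor_mono) simp
  moreover have "\<not> ?x < of_int \<lfloor>y + 1 / 2\<rfloor>"
  proof
    assume "?x < of_int \<lfloor>y + 1 / 2\<rfloor>"
    hence "upper_approx n + 1 / 2 < of_int \<lfloor>y + 1 / 2\<rfloor>" by (rule upper_approx_half_lt_int[OF assms(1)])
    thus False using assms(3) of_int_floor_le[of "y + 1 / 2"] by linarith
  qed
  hence "\<lfloor>y + 1 / 2\<rfloor> \<le> \<lfloor>?x\<rfloor>" by (simp add: le_floor_iff)
  ultimately show ?thesis using lower_approx_half_eq by simp
qed

theorem mainTheorem8:
  fixes r :: "nat \<Rightarrow> real"
  assumes pos: "\<And>n. n \<ge> 1 \<Longrightarrow> r n > 0"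
    and rec: "\<And>n. n \<ge> 1 \<Longrightarrow> r n = 2 * real n - 1 + (real n)^2 / r (n + 1)"
    and n: "n \<ge> 1"
  shows "\<lfloor>r n + 1/2\<rfloor> = \<lfloor>(1 + sqrt 2) * real n - sqrt 2 / 2\<rfloor>"
proof -
  have "lower_approx n \<le> r n \<and> r n \<le> upper_approx n"
    using recurrence_sandwich[OF pos rec upper_approx_recurrence lower_approx_le_recurrence
        lower_approx_ge n] .
  thus ?thesis using floor_round_eq_if_approx[OF n] by simp
qed

end
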